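(* If the communication graph of a system is a simple chain (a path graph) of $n\ge2$ trajectories, then its isolation-resilience is $n-2$.
   Context: Model. A system consists of pairwise disjoint unit circles $C_1,\dots,C_n$ in the plane (trajectories) and a communication range $r>0$. Its communication graph $G$ has vertex set $\{C_1,\dots,C_n\}$, $C_i,C_j$ adjacent iff the distance between their centres is at most $2+r$ (the circles need not lie on a straight line). Positions on a circle are angles (mod $2\pi$). For an edge $(i,j)$, the link position $\phi_{ij}$ is the angle of the point of $C_i$ closest to $C_j$. A schedule $F=(f,g)$ assigns each circle a starting angle $f(C_i)$ and direction $g(C_i)\in\{1,-1\}$; a robot following it on $C_i$ is at $f(C_i)+g(C_i)2\pi t$ at time $t$. $F$ is a synchronization schedule if $g(C_i)=-g(C_j)$ for adjacent circles and robots following $F$ on adjacent $C_i,C_j$ are at $\phi_{ij},\phi_{ji}$ at exactly the same times. A synchronized communication system (SCS) consists of $n$ robots, initially one per circle, following a synchronization schedule, with the switching rule: when a robot on $C_i$ reaches $\phi_{ij}$ and $C_j$ is empty, it instantly passes to $C_j$ and follows the schedule of $C_j$; if $C_j$ has a robot, they meet and each stays on its circle. A partial SCS arises by letting some robots leave (possibly at different times); remaining robots never leave. A surviving robot $u$ starves if every time $u$ arrives at a link position $\phi_{ij}$ of its current circle $C_i$, the circle $C_j$ is empty; the system is in starvation state if all surviving robots starve. The isolation-resilience is the largest $k$ such that, whichever $k$ robots leave, the system does not fall into starvation state. *)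

theory Defs
  imports Complex_Main
begin

text \<open>A system: circles (trajectories) C_0,...,C_(n-1) with centres c i (in the complex
plane, radius 1), communication range r. Robot u (u < n) starts on circle u.\<close>

definition valid_system :: "nat \<Rightarrow> real \<Rightarrow> (nat \<Rightarrow> complex) \<Rightarrow> bool" where
  "valid_system n r c \<longleftrightarrow> r > 0 \<and> (\<forall>i<n. \<forall>j<n. i \<noteq> j \<longrightarrow> cmod (c i - c j) > 2)"

definition adj :: "nat \<Rightarrow> real \<Rightarrow> (nat \<Rightarrow> complex) \<Rightarrow> nat \<Rightarrow> nat \<Rightarrow> bool" where
  "adj n r c i j \<longleftrightarrow> i < n \<and> j < n \<and> i \<noteq> j \<and> cmod (c i - c j) \<le> 2 + r"

definition is_path_graph :: "nat \<Rightarrow> real \<Rightarrow> (nat \<Rightarrow> complex) \<Rightarrow> bool" where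
  "is_path_graph n r c \<longleftrightarrow> (\<exists>\<sigma>. bij_betw \<sigma> {..<n} {..<n} \<and>
     (\<forall>i<n. \<forall>j<n. adj n r c i j \<longleftrightarrow> (\<sigma> i = Suc (\<sigma> j) \<or> \<sigma> j = Suc (\<sigma> i))))"

text \<open>Angle of a robot following schedule (f,g) on circle i at time t.\<close>
definition robot_pos :: "(nat \<Rightarrow> real) \<Rightarrow> (nat \<Rightarrow> int) \<Rightarrow> nat \<Rightarrow> real \<Rightarrow> real" where
  "robot_pos f g i t = f i + of_int (g i) * 2 * pi * t"

text \<open>A robot on C_i at time t is at the link position phi_ij, i.e. at the point of C_i
closest to C_j, which is c i + sgn (c j - c i).\<close>
definition at_link :: "(nat \<Rightarrow> complex) \<Rightarrow> (nat \<Rightarrow> real) \<Rightarrow> (nat \<Rightarrow> int) \<Rightarrow> nat \<Rightarrow> nat \<Rightarrow> real \<Rightarrow> bool" where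
  "at_link c f g i j t \<longleftrightarrow> cis (robot_pos f g i t) = sgn (c j - c i)"

definition sync_schedule :: "nat \<Rightarrow> real \<Rightarrow> (nat \<Rightarrow> complex) \<Rightarrow> (nat \<Rightarrow> real) \<Rightarrow> (nat \<Rightarrow> int) \<Rightarrow> bool" where
  "sync_schedule n r c f g \<longleftrightarrow> (\<forall>i<n. g i = 1 \<or> g i = -1) \<and>
     (\<forall>i j. adj n r c i j \<longrightarrow> g i = - g j \<and> (\<forall>t. at_link c f g i j t \<longleftrightarrow> at_link c f g j i t))"

definition event_times :: "nat \<Rightarrow> real \<Rightarrow> (nat \<Rightarrow> complex) \<Rightarrow> (nat \<Rightarrow> real) \<Rightarrow> (nat \<Rightarrow> int) \<Rightarrow> real set" where
  "event_times n r c f g = {t. 0 \<le> t \<and> (\<exists>i j. adj n r c i j \<and> at_link c f g i j t)}"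

fun ev_time :: "nat \<Rightarrow> real \<Rightarrow> (nat \<Rightarrow> complex) \<Rightarrow> (nat \<Rightarrow> real) \<Rightarrow> (nat \<Rightarrow> int) \<Rightarrow> nat \<Rightarrow> real" where
  "ev_time n r c f g 0 = Inf (event_times n r c f g)"
| "ev_time n r c f g (Suc k) = Inf {t \<in> event_times n r c f g. ev_time n r c f g k < t}"

text \<open>Leaving: leave u = None means robot u never leaves; leave u = Some s means it is
gone from time s on.\<close>
definition present :: "(nat \<Rightarrow> real option) \<Rightarrow> nat \<Rightarrow> real \<Rightarrow> bool" where
  "present leave u t \<longleftrightarrow> (case leave u of None \<Rightarrow> True | Some s \<Rightarrow> t < s)"

text \<open>Switching rule applied at time t to the configuration S (robot \<mapsto> circle).\<close>
definition step :: "nat \<Rightarrow> real \<Rightarrow> (nat \<Rightarrow> complex) \<Rightarrow> (nat \<Rightarrow> real) \<Rightarrow> (nat \<Rightarrow> int)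
    \<Rightarrow> (nat \<Rightarrow> real option) \<Rightarrow> real \<Rightarrow> (nat \<Rightarrow> nat) \<Rightarrow> (nat \<Rightarrow> nat)" where
  "step n r c f g leave t S = (\<lambda>u.
     if present leave u t \<and> (\<exists>j. adj n r c (S u) j \<and> at_link c f g (S u) j t \<and>
                               (\<forall>v<n. present leave v t \<longrightarrow> S v \<noteq> j))
     then (SOME j. adj n r c (S u) j \<and> at_link c f g (S u) j t \<and>
                   (\<forall>v<n. present leave v t \<longrightarrow> S v \<noteq> j))
     else S u)"

text \<open>config k = configuration just before the k-th event time.\<close>
fun config :: "nat \<Rightarrow> real \<Rightarrow> (nat \<Rightarrow> complex) \<Rightarrow> (nat \<Rightarrow> real) \<Rightarrow> (nat \<Rightarrow> int)
    \<Rightarrow> (nat \<Rightarrow> real option) \<Rightarrow> nat \<Rightarrow> (nat \<Rightarrow> nat)" where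
  "config n r c f g leave 0 = (\<lambda>u. u)"
| "config n r c f g leave (Suc k) =
     step n r c f g leave (ev_time n r c f g k) (config n r c f g leave k)"

definition starves_from :: "nat \<Rightarrow> real \<Rightarrow> (nat \<Rightarrow> complex) \<Rightarrow> (nat \<Rightarrow> real) \<Rightarrow> (nat \<Rightarrow> int)
    \<Rightarrow> (nat \<Rightarrow> real option) \<Rightarrow> nat \<Rightarrow> nat \<Rightarrow> bool" where
  "starves_from n r c f g leave K u \<longleftrightarrow>
     (\<forall>k\<ge>K. \<forall>j. adj n r c (config n r c f g leave k u) j \<and>
                 at_link c f g (config n r c f g leave k u) j (ev_time n r c f g k) \<longrightarrow>
                 (\<forall>v<n. present leave v (ev_time n r c f g k) \<longrightarrow> config n r c f g leave k v \<noteq> j))"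

definition starvation :: "nat \<Rightarrow> real \<Rightarrow> (nat \<Rightarrow> complex) \<Rightarrow> (nat \<Rightarrow> real) \<Rightarrow> (nat \<Rightarrow> int)
    \<Rightarrow> (nat \<Rightarrow> real option) \<Rightarrow> bool" where
  "starvation n r c f g leave \<longleftrightarrow>
     (\<exists>K. \<forall>u<n. leave u = None \<longrightarrow> starves_from n r c f g leave K u)"

definition resilient_for :: "nat \<Rightarrow> real \<Rightarrow> (nat \<Rightarrow> complex) \<Rightarrow> (nat \<Rightarrow> real) \<Rightarrow> (nat \<Rightarrow> int) \<Rightarrow> nat \<Rightarrow> bool" where
  "resilient_for n r c f g k \<longleftrightarrow>
     (\<forall>leave. (\<forall>u. leave u \<noteq> None \<longrightarrow> u < n) \<and> card {u. leave u \<noteq> None} = k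
              \<longrightarrow> \<not> starvation n r c f g leave)"

definition isolation_resilience :: "nat \<Rightarrow> real \<Rightarrow> (nat \<Rightarrow> complex) \<Rightarrow> (nat \<Rightarrow> real) \<Rightarrow> (nat \<Rightarrow> int) \<Rightarrow> nat" where
  "isolation_resilience n r c f g = (GREATEST k. k \<le> n \<and> resilient_for n r c f g k)"

end

theory Submission
  imports Defs
begin

text \<open>Robots on a circle pass each of its link positions once per time unit, and on a chain the
  link positions of a circle towards its (at most two) neighbours are distinct. So a starving robot
  that has just entered C_i from C_q meets the link position towards the other neighbour of C_i
  before it is back at the link towards C_q; finding that circle empty, it moves on. A starving
  robot therefore sweeps along the chain, turning back only at the left end, and reaches the right
  end. Robots never overtake each other on a chain, so of two survivors the left one cannot reach the
  right end: n - 2 departures never cause starvation. Conversely, if n - 1 robots leave before the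
  first event the survivor starves, and if all n leave, starvation holds vacuously.\<close>

lemma cis_eq_cis_iff: "cis x = cis y \<longleftrightarrow> (\<exists>m::int. x = y + 2 * pi * m)"
proof -
  have "cis x = cis y \<longleftrightarrow> sin x = sin y \<and> cos x = cos y"
    by (auto simp add: complex_eq_iff)
  also have "\<dots> \<longleftrightarrow> (\<exists>m::int. x = y + 2 * pi * m)"
    by (rule sin_cos_eq_iff)
  finally show ?thesis .
qed

lemma cis_rotation_eq_sgn_periodic:
  fixes \<phi> :: real and d :: int and w :: complex
  assumes "d = 1 \<or> d = -1" and "w \<noteq> 0"
  shows "\<exists>a. \<forall>s. cis (\<phi> + of_int d * 2 * pi * s) = sgn w \<longleftrightarrow> s - a \<in> \<int>"
proof -
  define a where "a = (Arg w - \<phi>) / (of_int d * 2 * pi)"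
  have d_ne: "(of_int d :: real) \<noteq> 0"
    using assms(1) by auto
  have sgn_w: "sgn w = cis (\<phi> + of_int d * 2 * pi * a)"
    using cis_Arg[OF assms(2)] d_ne pi_gt_zero by (simp add: a_def field_simps)
  have turns: "(\<exists>m::int. of_int d * 2 * pi * (s - a) = 2 * pi * m) \<longleftrightarrow> s - a \<in> \<int>" for s
  proof
    assume "\<exists>m::int. of_int d * 2 * pi * (s - a) = 2 * pi * m"
    then obtain m :: int where "of_int d * (s - a) = m"
      using pi_gt_zero by (auto simp: mult.assoc)
    then have "s - a = of_int (d * m)"
      using assms(1) by auto
    then show "s - a \<in> \<int>" by simp
  next
    assume "s - a \<in> \<int>"
    then obtain m :: int where "s - a = of_int m"
      by (auto elim: Ints_cases)
    then have "of_int d * 2 * pi * (s - a) = 2 * pi * of_int (d * m)"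
      by simp
    then show "\<exists>m::int. of_int d * 2 * pi * (s - a) = 2 * pi * m" by blast
  qed
  have "cis (\<phi> + of_int d * 2 * pi * s) = sgn w \<longleftrightarrow> s - a \<in> \<int>" for s
  proof -
    have "\<phi> + of_int d * 2 * pi * s = (\<phi> + of_int d * 2 * pi * a) + 2 * pi * m
        \<longleftrightarrow> of_int d * 2 * pi * (s - a) = 2 * pi * m" for m :: real
      by (auto simp: algebra_simps)
    then show ?thesis
      using sgn_w turns by (simp add: cis_eq_cis_iff)
  qed
  then show ?thesis by blast
qed

lemma Inf_is_minimum_if_finite_below:
  fixes Y :: "real set"
  assumes "Y \<noteq> {}" and "\<And>y. finite {t \<in> Y. t \<le> y}"
  shows "Inf Y \<in> Y \<and> (\<forall>t\<in>Y. Inf Y \<le> t)"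
proof -
  obtain y0 where "y0 \<in> Y"
    using assms(1) by blast
  define m where "m = Min {t \<in> Y. t \<le> y0}"
  have "m \<in> Y" and "m \<le> y0"
    using Min_in[OF assms(2), of y0] \<open>y0 \<in> Y\<close> unfolding m_def by auto
  moreover have "m \<le> t" if "t \<in> Y" for t
    using that \<open>m \<le> y0\<close> Min_le[OF assms(2), of t y0] unfolding m_def by (cases "t \<le> y0") auto
  ultimately have "Inf Y = m"
    by (intro cInf_eq_minimum) auto
  then show ?thesis
    using \<open>m \<in> Y\<close> \<open>\<And>t. t \<in> Y \<Longrightarrow> m \<le> t\<close> by simp
qed

locale sync_system =
  fixes n :: nat and r :: real and c :: "nat \<Rightarrow> complex"
    and f :: "nat \<Rightarrow> real" and g :: "nat \<Rightarrow> int"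
  assumes valid: "valid_system n r c"
    and sync: "sync_schedule n r c f g"
begin

abbreviation "E \<equiv> event_times n r c f g"
abbreviation "ev \<equiv> ev_time n r c f g"

lemma adjD: "adj n r c i j \<Longrightarrow> i < n \<and> j < n \<and> i \<noteq> j"
  by (simp add: adj_def)

lemma adj_sym: "adj n r c i j \<Longrightarrow> adj n r c j i"
  by (auto simp: adj_def norm_minus_commute)

lemma at_link_sym: "adj n r c i j \<Longrightarrow> at_link c f g i j t \<longleftrightarrow> at_link c f g j i t"
  using sync unfolding sync_schedule_def by blast

lemma at_link_periodic:
  assumes "adj n r c i j"
  shows "\<exists>a. \<forall>s. at_link c f g i j s \<longleftrightarrow> s - a \<in> \<int>"
proof -
  have "g i = 1 \<or> g i = -1" and "c j - c i \<noteq> 0"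
    using assms sync valid by (auto simp: adj_def sync_schedule_def valid_system_def) force
  then show ?thesis
    unfolding at_link_def robot_pos_def by (rule cis_rotation_eq_sgn_periodic)
qed

lemma at_link_add_1:
  assumes "adj n r c i j" "at_link c f g i j s"
  shows "at_link c f g i j (s + 1)"
proof -
  obtain a where "\<forall>s. at_link c f g i j s \<longleftrightarrow> s - a \<in> \<int>"
    using at_link_periodic[OF assms(1)] by blast
  with assms(2) show ?thesis
    using Ints_add[OF _ Ints_1, of "s - a"] by (simp add: algebra_simps)
qed

lemma at_link_diff_Ints:
  assumes "adj n r c i j" "at_link c f g i j s" "at_link c f g i j s'"
  shows "s - s' \<in> \<int>"
proof -
  obtain a where "\<forall>s. at_link c f g i j s \<longleftrightarrow> s - a \<in> \<int>"
    using at_link_periodic[OF assms(1)] by blast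
  with assms(2,3) show ?thesis
    using Ints_diff[of "s - a" "s' - a"] by simp
qed

lemma at_link_within_period:
  assumes "adj n r c i j"
  shows "\<exists>s. t < s \<and> s \<le> t + 1 \<and> at_link c f g i j s"
proof -
  obtain a where a: "\<forall>s. at_link c f g i j s \<longleftrightarrow> s - a \<in> \<int>"
    using at_link_periodic[OF assms] by blast
  define s where "s = a + of_int \<lfloor>t - a\<rfloor> + 1"
  have "t < s" "s \<le> t + 1" "s - a \<in> \<int>"
    unfolding s_def by linarith+ simp
  then show ?thesis
    using a by blast
qed

lemma finite_at_link_below:
  assumes "adj n r c i j"
  shows "finite {s. at_link c f g i j s \<and> 0 \<le> s \<and> s \<le> y}"
proof -
  obtain a where a: "\<forall>s. at_link c f g i j s \<longleftrightarrow> s - a \<in> \<int>"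
    using at_link_periodic[OF assms] by blast
  have "{s. at_link c f g i j s \<and> 0 \<le> s \<and> s \<le> y} \<subseteq> (\<lambda>m. a + of_int m) ` {\<lceil>- a\<rceil>..\<lfloor>y - a\<rfloor>}"
  proof
    fix s assume "s \<in> {s. at_link c f g i j s \<and> 0 \<le> s \<and> s \<le> y}"
    then obtain m where "s = a + of_int m" "0 \<le> s" "s \<le> y"
      using a by (auto elim!: Ints_cases simp: algebra_simps)
    then show "s \<in> (\<lambda>m. a + of_int m) ` {\<lceil>- a\<rceil>..\<lfloor>y - a\<rfloor>}"
      by (auto simp: ceiling_le_iff le_floor_iff)
  qed
  then show ?thesis
    by (rule finite_subset) auto
qed

lemma finite_event_times_below: "finite {t \<in> E. t \<le> y}"
proof -
  have "{t \<in> E. t \<le> y} \<subseteq>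
      (\<Union>i<n. \<Union>j\<in>{j. adj n r c i j}. {s. at_link c f g i j s \<and> 0 \<le> s \<and> s \<le> y})"
    by (auto simp: event_times_def dest: adjD)
  moreover have "finite {j. adj n r c i j}" for i
    by (rule finite_subset[of _ "{..<n}"]) (auto dest: adjD)
  ultimately show ?thesis
    by (elim finite_subset) (auto intro: finite_at_link_below)
qed

lemma step_moved:
  assumes "step n r c f g leave t S u \<noteq> S u"
  shows "present leave u t \<and> adj n r c (S u) (step n r c f g leave t S u)
    \<and> at_link c f g (S u) (step n r c f g leave t S u) t
    \<and> (\<forall>v<n. present leave v t \<longrightarrow> S v \<noteq> step n r c f g leave t S u)"
proof -
  let ?P = "\<lambda>j. adj n r c (S u) j \<and> at_link c f g (S u) j t \<and> (\<forall>v<n. present leave v t \<longrightarrow> S v \<noteq> j)"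
  have "present leave u t \<and> (\<exists>j. ?P j)"
    using assms unfolding step_def by (auto split: if_splits)
  moreover from this have "step n r c f g leave t S u = (SOME j. ?P j)"
    unfolding step_def by simp
  ultimately show ?thesis
    using someI_ex[of ?P] by simp
qed

lemma config_Suc_moved:
  assumes "config n r c f g leave (Suc k) u \<noteq> config n r c f g leave k u"
  shows "present leave u (ev k)
    \<and> adj n r c (config n r c f g leave k u) (config n r c f g leave (Suc k) u)
    \<and> at_link c f g (config n r c f g leave k u) (config n r c f g leave (Suc k) u) (ev k)
    \<and> (\<forall>v<n. present leave v (ev k) \<longrightarrow> config n r c f g leave k v \<noteq> config n r c f g leave (Suc k) u)"
  using step_moved[of leave "ev k" "config n r c f g leave k" u] assms by simp

lemma config_less: "u < n \<Longrightarrow> config n r c f g leave k u < n"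
proof (induction k)
  case (Suc k)
  then show ?case
    using config_Suc_moved[of leave k u] adjD
    by (cases "config n r c f g leave (Suc k) u = config n r c f g leave k u") auto
qed simp

end

locale path_system = sync_system +
  fixes \<sigma> :: "nat \<Rightarrow> nat"
  assumes two_le_n: "2 \<le> n"
    and \<sigma>_bij: "bij_betw \<sigma> {..<n} {..<n}"
    and adj_iff_consecutive:
      "\<forall>i<n. \<forall>j<n. adj n r c i j \<longleftrightarrow> (\<sigma> i = Suc (\<sigma> j) \<or> \<sigma> j = Suc (\<sigma> i))"
begin

lemma \<sigma>_less: "i < n \<Longrightarrow> \<sigma> i < n"
  using \<sigma>_bij by (auto simp: bij_betw_def)

lemma \<sigma>_inj: "i < n \<Longrightarrow> j < n \<Longrightarrow> \<sigma> i = \<sigma> j \<Longrightarrow> i = j"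
  using \<sigma>_bij by (auto simp: bij_betw_def inj_on_def)

lemma \<sigma>_surj: "p < n \<Longrightarrow> \<exists>i<n. \<sigma> i = p"
  using \<sigma>_bij by (metis bij_betw_iff_bijections lessThan_iff)

lemma adj_iff: "adj n r c i j \<longleftrightarrow> i < n \<and> j < n \<and> (\<sigma> i = Suc (\<sigma> j) \<or> \<sigma> j = Suc (\<sigma> i))"
  using adj_iff_consecutive adjD by blast

lemma adj_\<sigma>_pred:
  assumes "i < n" "0 < \<sigma> i"
  shows "\<exists>j. adj n r c i j \<and> Suc (\<sigma> j) = \<sigma> i"
proof -
  have "\<sigma> i - 1 < n"
    using \<sigma>_less[OF assms(1)] by linarith
  then obtain j where "j < n" "\<sigma> j = \<sigma> i - 1"
    using \<sigma>_surj by blast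
  with assms show ?thesis
    by (intro exI[of _ j]) (auto simp: adj_iff)
qed

lemma adj_\<sigma>_succ: "i < n \<Longrightarrow> Suc (\<sigma> i) < n \<Longrightarrow> \<exists>j. adj n r c i j \<and> \<sigma> j = Suc (\<sigma> i)"
  using \<sigma>_surj[of "Suc (\<sigma> i)"] by (auto simp: adj_iff)

lemma at_most_two_neighbours:
  assumes adj: "adj n r c i a" "adj n r c i b" "adj n r c i d" and "a \<noteq> b" "a \<noteq> d"
  shows "b = d"
proof -
  have "\<sigma> a \<noteq> \<sigma> b" "\<sigma> a \<noteq> \<sigma> d"
    using assms \<sigma>_inj by (auto simp: adj_iff)
  with adj have "\<sigma> b = \<sigma> d"
    unfolding adj_iff by arith
  with adj show ?thesis
    using \<sigma>_inj by (auto simp: adj_iff)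
qed

text \<open>Link positions of C_i towards two different neighbours differ: otherwise both centres
  lie on one ray from c i within distance 2 + r, hence within 2 + r of each other, and the
  three circles would form a triangle in the path.\<close>
lemma at_link_unique:
  assumes "adj n r c i j" "adj n r c i j'" "at_link c f g i j t" "at_link c f g i j' t"
  shows "j = j'"
proof (rule ccontr)
  assume "j \<noteq> j'"
  define w where "w = sgn (c j - c i)"
  have ne: "c j - c i \<noteq> 0" "c j' - c i \<noteq> 0"
    using assms(1,2) valid by (auto simp: adj_def valid_system_def) force+
  have w': "sgn (c j' - c i) = w"
    using assms(3,4) unfolding at_link_def w_def by simp
  define d d' where "d = cmod (c j - c i)" and "d' = cmod (c j' - c i)"
  have "c j - c i = of_real d * w"
    using ne unfolding w_def d_def by (simp add: sgn_eq)
  moreover have "c j' - c i = of_real d' * w"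
    using ne unfolding w'[symmetric] d'_def by (simp add: sgn_eq)
  ultimately have "c j - c j' = of_real (d - d') * w"
    by (simp add: algebra_simps)
  then have "cmod (c j - c j') = \<bar>d - d'\<bar>"
    using ne unfolding w_def by (simp add: norm_mult norm_sgn flip: of_real_diff)
  also have "\<dots> \<le> 2 + r"
  proof -
    have "d \<le> 2 + r" "d' \<le> 2 + r"
      using assms(1,2) unfolding d_def d'_def by (auto simp: adj_def norm_minus_commute)
    moreover have "0 \<le> d" "0 \<le> d'"
      unfolding d_def d'_def by simp_all
    ultimately show ?thesis
      by linarith
  qed
  finally have "adj n r c j j'"
    using assms(1,2) \<open>j \<noteq> j'\<close> by (auto simp: adj_def)
  moreover have "\<sigma> j \<noteq> \<sigma> j'"
    using assms(1,2) \<open>j \<noteq> j'\<close> \<sigma>_inj by (auto simp: adj_iff)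
  ultimately show False
    using assms(1,2) unfolding adj_iff by arith
qed

lemma event_times_unbounded: "\<exists>t\<in>E. x < t"
proof -
  obtain i j where "i < n" "\<sigma> i = 0" "j < n" "\<sigma> j = 1"
    using \<sigma>_surj[of 0] \<sigma>_surj[of 1] two_le_n by auto
  then have "adj n r c i j"
    by (simp add: adj_iff)
  obtain s where "max x 0 < s" "at_link c f g i j s"
    using at_link_within_period[OF \<open>adj n r c i j\<close>] by blast
  with \<open>adj n r c i j\<close> have "s \<in> E"
    unfolding event_times_def by force
  with \<open>max x 0 < s\<close> show ?thesis
    by auto
qed

lemma ev_time_0: "ev 0 \<in> E \<and> (\<forall>t\<in>E. ev 0 \<le> t)"
  using Inf_is_minimum_if_finite_below[of E] event_times_unbounded finite_event_times_below
  by auto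

lemma ev_time_Suc: "ev (Suc k) \<in> E \<and> ev k < ev (Suc k) \<and> (\<forall>t\<in>E. ev k < t \<longrightarrow> ev (Suc k) \<le> t)"
proof -
  have "{t \<in> E. ev k < t} \<noteq> {}"
    using event_times_unbounded by blast
  moreover have "finite {t' \<in> {t \<in> E. ev k < t}. t' \<le> y}" for y
    using finite_event_times_below[of y] by (rule finite_subset[rotated]) auto
  ultimately show ?thesis
    using Inf_is_minimum_if_finite_below[of "{t \<in> E. ev k < t}"] by auto
qed

lemma ev_time_in: "ev k \<in> E"
  using ev_time_0 ev_time_Suc by (cases k) auto

lemma ev_time_nonneg: "0 \<le> ev k"
  using ev_time_in[of k] by (simp add: event_times_def)

lemma strict_mono_ev_time: "strict_mono ev"
  using ev_time_Suc by (simp add: strict_mono_Suc_iff)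

lemma ev_time_less_iff: "ev k < ev k' \<longleftrightarrow> k < k'"
  using strict_mono_ev_time by (rule strict_mono_less)

lemma ev_time_le_iff: "ev k \<le> ev k' \<longleftrightarrow> k \<le> k'"
  using strict_mono_ev_time by (rule strict_mono_less_eq)

lemma event_time_enumerated:
  assumes "t \<in> E"
  shows "\<exists>k. ev k = t"
proof -
  define ks where "ks = {k. ev k \<le> t}"
  have "finite (ev ` ks)"
    using finite_event_times_below[of t]
    by (rule finite_subset[rotated]) (auto simp: ks_def ev_time_in)
  then have "finite ks"
    using strict_mono_ev_time by (simp add: finite_image_iff strict_mono_imp_inj_on)
  moreover have "0 \<in> ks"
    using ev_time_0 assms by (simp add: ks_def)
  ultimately have "Max ks \<in> ks" "Suc (Max ks) \<notin> ks"
    using Max_in Max_ge Suc_n_not_le_n by blast+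
  then have "ev (Max ks) \<le> t" "t < ev (Suc (Max ks))"
    by (auto simp: ks_def)
  moreover have "\<not> ev (Max ks) < t"
  proof
    assume "ev (Max ks) < t"
    then have "ev (Suc (Max ks)) \<le> t"
      using ev_time_Suc assms by blast
    with \<open>t < ev (Suc (Max ks))\<close> show False
      by simp
  qed
  ultimately show ?thesis
    by (intro exI[of _ "Max ks"]) simp
qed

lemma step_to_free_link:
  assumes "present leave u t" "adj n r c (S u) j" "at_link c f g (S u) j t"
    and "\<forall>v<n. present leave v t \<longrightarrow> S v \<noteq> j"
  shows "step n r c f g leave t S u = j"
proof -
  let ?P = "\<lambda>j. adj n r c (S u) j \<and> at_link c f g (S u) j t \<and> (\<forall>v<n. present leave v t \<longrightarrow> S v \<noteq> j)"
  have ex: "\<exists>j. ?P j"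
    using assms by blast
  then have "step n r c f g leave t S u = (SOME j. ?P j)"
    using assms(1) unfolding step_def by (intro if_P) blast
  moreover have "?P (SOME j. ?P j)"
    using ex by (rule someI_ex)
  ultimately show ?thesis
    using at_link_unique[OF assms(2) _ assms(3)] by metis
qed

text \<open>Two present robots on different circles never enter the same circle: if both moved,
  the target circle would be at its link positions towards both their circles at once.\<close>
lemma step_keeps_apart:
  assumes "A < n" "B < n" "present leave A t" "present leave B t" "S A \<noteq> S B"
  shows "step n r c f g leave t S A \<noteq> step n r c f g leave t S B"
proof
  let ?a = "step n r c f g leave t S A" and ?b = "step n r c f g leave t S B"
  assume "?a = ?b"
  show False
  proof (cases "?a = S A \<or> ?b = S B")
    case True
    then have "?b \<noteq> S B \<and> ?b = S A \<or> ?a \<noteq> S A \<and> ?a = S B"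
      using \<open>?a = ?b\<close> assms(5) by auto
    then show False
    proof
      assume "?b \<noteq> S B \<and> ?b = S A"
      then show False
        using step_moved[of leave t S B] assms(1,3) by auto
    next
      assume "?a \<noteq> S A \<and> ?a = S B"
      then show False
        using step_moved[of leave t S A] assms(2,4) by auto
    qed
  next
    case False
    then have "adj n r c (S A) ?a \<and> at_link c f g (S A) ?a t"
      "adj n r c (S B) ?a \<and> at_link c f g (S B) ?a t"
      using step_moved[of leave t S A] step_moved[of leave t S B] \<open>?a = ?b\<close> by simp_all
    then have "adj n r c ?a (S A)" "at_link c f g ?a (S A) t" "adj n r c ?a (S B)" "at_link c f g ?a (S B) t"
      using adj_sym at_link_sym by blast+
    then show False
      using at_link_unique assms(5) by blast
  qed
qed

lemma step_preserves_order:
  assumes "A < n" "B < n" "present leave A t" "present leave B t"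
    and "S A < n" "S B < n" "\<sigma> (S A) < \<sigma> (S B)"
  shows "\<sigma> (step n r c f g leave t S A) < \<sigma> (step n r c f g leave t S B)"
proof -
  let ?a = "step n r c f g leave t S A" and ?b = "step n r c f g leave t S B"
  have moves: "?a = S A \<or> adj n r c (S A) ?a" "?b = S B \<or> adj n r c (S B) ?b"
    using step_moved[of leave t S A] step_moved[of leave t S B] by auto
  then have "?a < n" "?b < n"
    using assms(5,6) adjD by auto
  moreover have "?a \<noteq> ?b"
    using assms(7) by (intro step_keeps_apart[OF assms(1-4)]) auto
  ultimately have "\<sigma> ?a \<noteq> \<sigma> ?b"
    using \<sigma>_inj by blast
  moreover have "?a \<noteq> S B"
    using step_moved[of leave t S A] assms(2,4,7) by fastforce
  moreover have "\<sigma> ?a = \<sigma> (S A) \<or> \<sigma> ?a = Suc (\<sigma> (S A)) \<or> \<sigma> (S A) = Suc (\<sigma> ?a)"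
    "\<sigma> ?b = \<sigma> (S B) \<or> \<sigma> ?b = Suc (\<sigma> (S B)) \<or> \<sigma> (S B) = Suc (\<sigma> ?b)"
    using moves by (auto simp: adj_iff)
  ultimately have "\<sigma> ?a < \<sigma> ?b \<or> \<sigma> ?a = \<sigma> (S B)"
    using assms(7) by linarith
  then show ?thesis
    using \<sigma>_inj \<open>?a < n\<close> assms(6) \<open>?a \<noteq> S B\<close> by blast
qed

lemma at_link_recurs_after_one_period:
  assumes "adj n r c i j" "at_link c f g i j t" "at_link c f g i j t'" "t < t'" "t' \<le> t + 1"
  shows "t' = t + 1"
proof -
  obtain m :: int where "t' - t = of_int m"
    using at_link_diff_Ints[OF assms(1,3,2)] by (auto elim: Ints_cases)
  with assms(4,5) have "m = 1"
    by linarith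
  with \<open>t' - t = of_int m\<close> show ?thesis
    by simp
qed

lemma at_link_other_within_period:
  assumes "adj n r c i q" "adj n r c i j" "at_link c f g i q t"
  shows "\<exists>s. t < s \<and> s \<le> t + 1 \<and> at_link c f g i j s \<and> (j \<noteq> q \<longrightarrow> s < t + 1)"
proof (cases "j = q")
  case True
  then show ?thesis
    using at_link_add_1[OF assms(1,3)] by (intro exI[of _ "t + 1"]) auto
next
  case False
  obtain s where "t < s" "s \<le> t + 1" "at_link c f g i j s"
    using at_link_within_period[OF assms(2)] by blast
  moreover have "s \<noteq> t + 1"
    using at_link_unique[OF assms(2,1)] at_link_add_1[OF assms(1,3)] False \<open>at_link c f g i j s\<close>
    by blast
  ultimately show ?thesis
    by auto
qed

declare config.simps(2) [simp del]

context
  fixes leave :: "nat \<Rightarrow> real option"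
begin

abbreviation pos :: "nat \<Rightarrow> nat \<Rightarrow> nat" where
  "pos k u \<equiv> config n r c f g leave k u"

lemma surviving_robots_keep_order:
  assumes "A < n" "B < n" "leave A = None" "leave B = None" "\<sigma> A < \<sigma> B"
  shows "\<sigma> (pos k A) < \<sigma> (pos k B)"
proof (induction k)
  case 0
  then show ?case
    using assms(5) by simp
next
  case (Suc k)
  then show ?case
    using step_preserves_order[OF assms(1,2)] config_less assms(1-4)
    by (simp add: present_def config.simps(2))
qed

context
  fixes u K :: nat
  assumes u_less: "u < n" and u_stays: "leave u = None"
    and u_starves: "starves_from n r c f g leave K u"
begin

lemma starving_robot_takes_link:
  assumes "K \<le> k" "adj n r c (pos k u) j" "at_link c f g (pos k u) j (ev k)"
  shows "pos (Suc k) u = j"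
proof -
  have "\<forall>v<n. present leave v (ev k) \<longrightarrow> pos k v \<noteq> j"
    using u_starves assms unfolding starves_from_def by blast
  moreover have "present leave u (ev k)"
    using u_stays by (simp add: present_def)
  ultimately show ?thesis
    using step_to_free_link[of leave u "ev k" "config n r c f g leave k" j] assms(2,3)
    by (simp add: config.simps(2))
qed

lemma starving_robot_leaves_by_link_time:
  assumes "K \<le> k0" "pos k0 u = i" "k0 \<le> k1" "adj n r c i j" "at_link c f g i j (ev k1)"
  shows "\<exists>k. k0 \<le> k \<and> k \<le> k1 \<and> pos k u = i \<and> pos (Suc k) u \<noteq> i"
proof (rule ccontr)
  assume stuck: "\<not> ?thesis"
  have stays: "pos k u = i" if "k0 \<le> k" "k \<le> k1" for k
    using that
  proof (induction k rule: dec_induct)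
    case base
    show ?case
      using assms(2) .
  next
    case (step k)
    then show ?case
      using stuck by force
  qed
  then have "pos k1 u = i"
    using assms(3) by blast
  then have "pos (Suc k1) u \<noteq> i"
    using starving_robot_takes_link[of k1 j] assms(1,3-5) adjD by force
  then show False
    using stuck assms(3) \<open>pos k1 u = i\<close> by blast
qed

text \<open>A starving robot that entered C_i from C_q at time t is back at the link towards C_q at
  time t + 1 and meets the link towards any other neighbour before; it leaves C_i at the first of
  these link times.\<close>
lemma starving_robot_hops:
  assumes "K \<le> k" "pos k u = q" "pos (Suc k) u = i" "q \<noteq> i" "adj n r c i j"
    and "j \<noteq> q \<or> (\<forall>j'. adj n r c i j' \<longrightarrow> j' = q)"
  shows "\<exists>k'>k. pos k' u = i \<and> pos (Suc k') u = j"
proof -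
  let ?t = "ev k"
  have "adj n r c q i" "at_link c f g q i ?t"
    using config_Suc_moved[of leave k u] assms(2-4) by auto
  then have iq: "adj n r c i q" "at_link c f g i q ?t"
    using adj_sym at_link_sym by blast+
  then obtain s where s: "?t < s" "s \<le> ?t + 1" "at_link c f g i j s" "j \<noteq> q \<longrightarrow> s < ?t + 1"
    using at_link_other_within_period[OF iq(1) assms(5)] by blast
  then have "s \<in> E"
    using assms(5) ev_time_nonneg[of k] unfolding event_times_def by force
  then obtain k1 where k1: "ev k1 = s"
    using event_time_enumerated by blast
  then have "Suc k \<le> k1"
    using s(1) ev_time_less_iff[of k k1] by (simp add: Suc_le_eq)
  then obtain k' where k': "Suc k \<le> k'" "k' \<le> k1" "pos k' u = i" "pos (Suc k') u \<noteq> i"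
    using starving_robot_leaves_by_link_time[of "Suc k" i k1 j] assms(1,3,5) s(3) k1 by auto
  define j' where "j' = pos (Suc k') u"
  have j': "adj n r c i j'" "at_link c f g i j' (ev k')"
    using config_Suc_moved[of leave k' u] k'(3,4) unfolding j'_def by auto
  have "?t < ev k'" "ev k' \<le> s"
    using k'(1,2) k1 ev_time_less_iff[of k k'] ev_time_le_iff[of k' k1] by (simp_all add: Suc_le_eq)
  have "j' = j"
  proof (cases "j' = q")
    case True
    then have "ev k' = ?t + 1"
      using at_link_recurs_after_one_period[OF iq] j'(2) \<open>?t < ev k'\<close> \<open>ev k' \<le> s\<close> s(2)
      by simp
    then have "j = q"
      using s(2,4) \<open>ev k' \<le> s\<close> by linarith
    with True show ?thesis
      by simp
  next
    case False
    then show ?thesis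
      using at_most_two_neighbours[OF iq(1) j'(1) assms(5)] assms(6) j'(1) by blast
  qed
  then show ?thesis
    using k' j'_def by (intro exI[of _ k']) auto
qed

lemma starving_robot_sweeps_right:
  assumes "K \<le> k" "pos k u = q" "pos (Suc k) u = i" "\<sigma> i = Suc (\<sigma> q)"
  shows "\<exists>k'. \<sigma> (pos k' u) = n - 1"
  using assms
proof (induction "n - 1 - \<sigma> i" arbitrary: k q i)
  case 0
  have "\<sigma> i < n"
    using \<sigma>_less config_less u_less \<open>pos (Suc k) u = i\<close> by blast
  with 0 show ?case
    by (intro exI[of _ "Suc k"]) simp
next
  case (Suc d)
  have "i < n" "q \<noteq> i"
    using config_less u_less Suc.prems by auto
  moreover have "Suc (\<sigma> i) < n"
    using Suc.hyps(2) by linarith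
  ultimately obtain j where j: "adj n r c i j" "\<sigma> j = Suc (\<sigma> i)"
    using adj_\<sigma>_succ by blast
  then have "j \<noteq> q"
    using Suc.prems(4) by auto
  then obtain k' where "k < k'" "pos k' u = i" "pos (Suc k') u = j"
    using starving_robot_hops[OF Suc.prems(1-3) \<open>q \<noteq> i\<close> j(1)] by blast
  then show ?case
    using Suc.hyps(1)[of j k' i] Suc.hyps(2) Suc.prems(1) j(2) by simp
qed

lemma starving_robot_turns_right:
  assumes "K \<le> k" "pos k u = q" "pos (Suc k) u = i" "\<sigma> q = Suc (\<sigma> i)"
  shows "\<exists>k' q' i'. k \<le> k' \<and> pos k' u = q' \<and> pos (Suc k') u = i' \<and> \<sigma> i' = Suc (\<sigma> q')"
  using assms
proof (induction "\<sigma> i" arbitrary: k q i)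
  case 0
  have "i < n" "q < n" "q \<noteq> i"
    using config_less u_less 0 by auto
  then have "adj n r c i q"
    using 0 by (simp add: adj_iff)
  moreover have "\<forall>j. adj n r c i j \<longrightarrow> j = q"
  proof (intro allI impI)
    fix j
    assume "adj n r c i j"
    then have "j < n" "\<sigma> j = \<sigma> q"
      using 0(1,5) by (auto simp: adj_iff)
    then show "j = q"
      using \<sigma>_inj \<open>q < n\<close> by blast
  qed
  ultimately obtain k' where "k < k'" "pos k' u = i" "pos (Suc k') u = q"
    using starving_robot_hops[OF 0(2-4) \<open>q \<noteq> i\<close>] by blast
  with 0(5) show ?case
    by (intro exI[of _ k'] exI[of _ i] exI[of _ q]) auto
next
  case (Suc d)
  have "i < n" "q \<noteq> i"
    using config_less u_less Suc.prems by auto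
  moreover have "0 < \<sigma> i"
    using Suc.hyps(2) by simp
  ultimately obtain j where j: "adj n r c i j" "Suc (\<sigma> j) = \<sigma> i"
    using adj_\<sigma>_pred by blast
  then have "j \<noteq> q"
    using Suc.prems(4) by auto
  then obtain k' where "k < k'" "pos k' u = i" "pos (Suc k') u = j"
    using starving_robot_hops[OF Suc.prems(1-3) \<open>q \<noteq> i\<close> j(1)] by blast
  moreover have "d = \<sigma> j"
    using Suc.hyps(2) j(2) by simp
  ultimately have "\<exists>k'' q' i'. k' \<le> k'' \<and> pos k'' u = q' \<and> pos (Suc k'') u = i' \<and> \<sigma> i' = Suc (\<sigma> q')"
    using Suc.hyps(1)[of j k' i] Suc.prems(1) j(2) by simp
  with \<open>k < k'\<close> show ?case
    by (meson less_imp_le order.trans)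
qed

lemma starving_robot_reaches_right_end: "\<exists>k. \<sigma> (pos k u) = n - 1"
proof -
  let ?i = "pos K u"
  have "?i < n"
    using config_less u_less by blast
  moreover have "Suc (\<sigma> ?i) < n \<or> 0 < \<sigma> ?i"
    using two_le_n \<sigma>_less[OF \<open>?i < n\<close>] by linarith
  ultimately obtain j where j: "adj n r c ?i j"
    using adj_\<sigma>_succ adj_\<sigma>_pred by blast
  then obtain s where s: "ev K < s" "at_link c f g ?i j s"
    using at_link_within_period by blast
  then have "s \<in> E"
    using j ev_time_nonneg[of K] unfolding event_times_def by force
  then obtain k1 where "ev k1 = s"
    using event_time_enumerated by blast
  then have "K \<le> k1"
    using s(1) ev_time_less_iff[of K k1] by simp
  then obtain k where k: "K \<le> k" "pos k u = ?i" "pos (Suc k) u \<noteq> ?i"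
    using starving_robot_leaves_by_link_time[of K ?i k1 j] j s(2) \<open>ev k1 = s\<close> by auto
  then have "adj n r c ?i (pos (Suc k) u)"
    using config_Suc_moved[of leave k u] by auto
  then consider "\<sigma> (pos (Suc k) u) = Suc (\<sigma> ?i)" | "\<sigma> ?i = Suc (\<sigma> (pos (Suc k) u))"
    by (auto simp: adj_iff)
  then show ?thesis
  proof cases
    case 1
    then show ?thesis
      using starving_robot_sweeps_right k(1,2) by blast
  next
    case 2
    then obtain k' q' i' where "k \<le> k'" "pos k' u = q'" "pos (Suc k') u = i'" "\<sigma> i' = Suc (\<sigma> q')"
      using starving_robot_turns_right k(1,2) by blast
    moreover from this have "K \<le> k'"
      using k(1) by linarith
    ultimately show ?thesis
      using starving_robot_sweeps_right by blast
  qed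
qed

end

lemma no_starvation_with_two_survivors:
  assumes "A < n" "B < n" "A \<noteq> B" "leave A = None" "leave B = None"
  shows "\<not> starvation n r c f g leave"
proof
  assume "starvation n r c f g leave"
  then obtain K where starving: "\<forall>u<n. leave u = None \<longrightarrow> starves_from n r c f g leave K u"
    unfolding starvation_def by blast
  have False
    if survivors: "A' < n" "B' < n" "leave A' = None" "leave B' = None" "\<sigma> A' < \<sigma> B'" for A' B'
  proof -
    obtain k where "\<sigma> (pos k A') = n - 1"
      using starving_robot_reaches_right_end[OF survivors(1,3)] starving survivors(1,3) by blast
    moreover have "\<sigma> (pos k A') < \<sigma> (pos k B')"
      by (rule surviving_robots_keep_order[OF survivors])
    moreover have "\<sigma> (pos k B') < n"
      using \<sigma>_less config_less survivors(2) by blast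
    ultimately show False
      by simp
  qed
  moreover have "\<sigma> A \<noteq> \<sigma> B"
    using \<sigma>_inj assms(1-3) by blast
  ultimately show False
    using assms by (metis linorder_neqE_nat)
qed

end

lemma resilient_for_n_minus_2: "resilient_for n r c f g (n - 2)"
  unfolding resilient_for_def
proof (intro allI impI)
  fix leave :: "nat \<Rightarrow> real option"
  assume "(\<forall>u. leave u \<noteq> None \<longrightarrow> u < n) \<and> card {u. leave u \<noteq> None} = n - 2"
  then have "card ({..<n} - {u. leave u \<noteq> None}) = 2"
    using two_le_n by (subst card_Diff_subset) (auto intro: finite_subset[of _ "{..<n}"])
  then obtain A B where "{..<n} - {u. leave u \<noteq> None} = {A, B}" "A \<noteq> B"
    by (auto simp: card_2_iff)
  then have "A < n" "B < n" "leave A = None" "leave B = None"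
    by blast+
  then show "\<not> starvation n r c f g leave"
    using no_starvation_with_two_survivors \<open>A \<noteq> B\<close> by blast
qed

text \<open>Robots that leave at time -1 are absent at every event time, so the single survivor
  starves from the start.\<close>
lemma not_resilient_for_n_minus_1: "\<not> resilient_for n r c f g (n - 1)"
proof -
  define leave :: "nat \<Rightarrow> real option"
    where "leave u = (if 0 < u \<and> u < n then Some (-1) else None)" for u
  have leavers: "{u. leave u \<noteq> None} = {1..<n}"
    by (auto simp: leave_def)
  have "starves_from n r c f g leave 0 0"
    unfolding starves_from_def
  proof (intro allI impI)
    fix k j v
    assume "0 \<le> k" and link: "adj n r c (config n r c f g leave k 0) j \<and>
        at_link c f g (config n r c f g leave k 0) j (ev k)"
      and "v < n" "present leave v (ev k)"
    then have "v = 0"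
      using ev_time_nonneg[of k] by (auto simp: present_def leave_def split: if_splits)
    then show "config n r c f g leave k v \<noteq> j"
      using link adjD by blast
  qed
  then have "starvation n r c f g leave"
    unfolding starvation_def by (intro exI[of _ 0]) (auto simp: leave_def)
  moreover have "\<forall>u. leave u \<noteq> None \<longrightarrow> u < n"
    by (simp add: leave_def)
  ultimately show ?thesis
    using leavers unfolding resilient_for_def by (intro notI) (auto dest!: spec[of _ leave])
qed

end

lemma not_resilient_for_n: "\<not> resilient_for n r c f g n"
proof -
  define leave :: "nat \<Rightarrow> real option" where "leave u = (if u < n then Some 0 else None)" for u
  have "{u. leave u \<noteq> None} = {..<n}"
    by (auto simp: leave_def)
  moreover have "starvation n r c f g leave"
    unfolding starvation_def by (simp add: leave_def)
  ultimately show ?thesis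
    unfolding resilient_for_def by (intro notI) (auto dest!: spec[of _ leave] simp: leave_def)
qed

theorem lemma21:
  fixes n :: nat and r :: real and c :: "nat \<Rightarrow> complex"
    and f :: "nat \<Rightarrow> real" and g :: "nat \<Rightarrow> int"
  assumes "n \<ge> 2"
    and "valid_system n r c"
    and "sync_schedule n r c f g"
    and "is_path_graph n r c"
  shows "isolation_resilience n r c f g = n - 2"
proof -
  obtain \<sigma> where "bij_betw \<sigma> {..<n} {..<n}"
    "\<forall>i<n. \<forall>j<n. adj n r c i j \<longleftrightarrow> (\<sigma> i = Suc (\<sigma> j) \<or> \<sigma> j = Suc (\<sigma> i))"
    using assms(4) unfolding is_path_graph_def by blast
  then interpret path_system n r c f g \<sigma>
    using assms(1-3) by unfold_locales auto
  have "k \<le> n - 2" if "k \<le> n" "resilient_for n r c f g k" for k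
    using that not_resilient_for_n_minus_1 not_resilient_for_n[of n r c f g]
    by (cases "k = n - 1 \<or> k = n") auto
  then show ?thesis
    unfolding isolation_resilience_def using resilient_for_n_minus_2
    by (intro Greatest_equality) auto
qed

end
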